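(* For every formula $\varphi$ of the modal language $\mathcal{L}_m$, $\varphi$ is derivable in $\mathsf{WK}$ if and only if $\varphi^\tau$ is derivable in $\mathsf{ConstCK}$.
   Context: Language $\mathcal{L}$: formulas $\varphi ::= p \mid \bot \mid \varphi\wedge\varphi \mid \varphi\vee\varphi \mid \varphi\to\varphi \mid \varphi \mathrel{\Box\!\!\to} \varphi \mid \varphi \mathrel{\Diamond\!\!\to}\varphi$; $\neg\varphi:=\varphi\to\bot$, $\top:=\neg\bot$, $\varphi\leftrightarrow\psi:=(\varphi\to\psi)\wedge(\psi\to\varphi)$. Modal language $\mathcal{L}_m$: formulas $\varphi ::= p\mid\bot\mid\varphi\wedge\varphi\mid\varphi\vee\varphi\mid\varphi\to\varphi\mid\Box\varphi\mid\Diamond\varphi$. $\mathsf{ConstCK}$: any axiomatisation of intuitionistic propositional logic in $\mathcal{L}$ with modus ponens, plus axioms CM$_\Box$: $(\varphi\mathrel{\Box\!\!\to}\psi\wedge\chi)\to(\varphi\mathrel{\Box\!\!\to}\psi)\wedge(\varphi\mathrel{\Box\!\!\to}\chi)$; CC$_\Box$: $(\varphi\mathrel{\Box\!\!\to}\psi)\wedge(\varphi\mathrel{\Box\!\!\to}\chi)\to(\varphi\mathrel{\Box\!\!\to}\psi\wedge\chi)$; CN$_\Box$: $\varphi\mathrel{\Box\!\!\to}\top$; CN$_\Diamond$: $\neg(\varphi\mathrel{\Diamond\!\!\to}\bot)$; CK$_\Diamond$: $(\varphi\mathrel{\Box\!\!\to}(\psi\to\chi))\to((\varphi\mathrel{\Diamond\!\!\to}\psi)\to(\varphi\mathrel{\Diamond\!\!\to}\chi))$;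 rules RA$_\Box$: from $\varphi\leftrightarrow\rho$ infer $(\varphi\mathrel{\Box\!\!\to}\psi)\leftrightarrow(\rho\mathrel{\Box\!\!\to}\psi)$; RC$_\Box$: from $\psi\leftrightarrow\chi$ infer $(\varphi\mathrel{\Box\!\!\to}\psi)\leftrightarrow(\varphi\mathrel{\Box\!\!\to}\chi)$; RA$_\Diamond$, RC$_\Diamond$: the same with $\mathrel{\Diamond\!\!\to}$. $\mathsf{WK}$ (propositional fragment of Wijesekera's logic): intuitionistic propositional logic in $\mathcal{L}_m$ with modus ponens, plus the rule from $\varphi$ infer $\Box\varphi$, and axioms $\Box(\varphi\to\psi)\to(\Box\varphi\to\Box\psi)$, $\Box(\varphi\to\psi)\to(\Diamond\varphi\to\Diamond\psi)$, $\neg\Diamond\bot$. Translation $(\cdot)^\tau:\mathcal{L}_m\to\mathcal{L}$: $p^\tau=p$, $\bot^\tau=\bot$, $(\rho\circ\psi)^\tau=\rho^\tau\circ\psi^\tau$ for $\circ\in\{\wedge,\vee,\to\}$, $(\Box\psi)^\tau=\top\mathrel{\Box\!\!\to}\psi^\tau$, $(\Diamond\psi)^\tau=\top\mathrel{\Diamond\!\!\to}\psi^\tau$. *)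

theory Defs
  imports Main
begin

datatype 'a cfm =
    CAtom 'a
  | CBot
  | CAnd "'a cfm" "'a cfm"
  | COr "'a cfm" "'a cfm"
  | CImp "'a cfm" "'a cfm"
  | CBoxArr "'a cfm" "'a cfm"
  | CDiaArr "'a cfm" "'a cfm"

definition CNeg :: "'a cfm \<Rightarrow> 'a cfm" where "CNeg A = CImp A CBot"
definition CTop :: "'a cfm" where "CTop = CNeg CBot"
definition CIff :: "'a cfm \<Rightarrow> 'a cfm \<Rightarrow> 'a cfm" where
  "CIff A B = CAnd (CImp A B) (CImp B A)"

datatype 'a mfm =
    MAtom 'a
  | MBot
  | MAnd "'a mfm" "'a mfm"
  | MOr "'a mfm" "'a mfm"
  | MImp "'a mfm" "'a mfm"
  | MBox "'a mfm"
  | MDia "'a mfm"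

definition MNeg :: "'a mfm \<Rightarrow> 'a mfm" where "MNeg A = MImp A MBot"

inductive ConstCK :: "'a cfm \<Rightarrow> bool" where
  K:  "ConstCK (CImp A (CImp B A))"
| S:  "ConstCK (CImp (CImp A (CImp B C)) (CImp (CImp A B) (CImp A C)))"
| AndE1: "ConstCK (CImp (CAnd A B) A)"
| AndE2: "ConstCK (CImp (CAnd A B) B)"
| AndI: "ConstCK (CImp A (CImp B (CAnd A B)))"
| OrI1: "ConstCK (CImp A (COr A B))"
| OrI2: "ConstCK (CImp B (COr A B))"
| OrE: "ConstCK (CImp (CImp A C) (CImp (CImp B C) (CImp (COr A B) C)))"
| BotE: "ConstCK (CImp CBot A)"
| MP: "ConstCK (CImp A B) \<Longrightarrow> ConstCK A \<Longrightarrow> ConstCK B"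
| CMbox: "ConstCK (CImp (CBoxArr A (CAnd B C)) (CAnd (CBoxArr A B) (CBoxArr A C)))"
| CCbox: "ConstCK (CImp (CAnd (CBoxArr A B) (CBoxArr A C)) (CBoxArr A (CAnd B C)))"
| CNbox: "ConstCK (CBoxArr A CTop)"
| CNdia: "ConstCK (CNeg (CDiaArr A CBot))"
| CKdia: "ConstCK (CImp (CBoxArr A (CImp B C)) (CImp (CDiaArr A B) (CDiaArr A C)))"
| RAbox: "ConstCK (CIff A R) \<Longrightarrow> ConstCK (CIff (CBoxArr A B) (CBoxArr R B))"
| RCbox: "ConstCK (CIff B C) \<Longrightarrow> ConstCK (CIff (CBoxArr A B) (CBoxArr A C))"
| RAdia: "ConstCK (CIff A R) \<Longrightarrow> ConstCK (CIff (CDiaArr A B) (CDiaArr R B))"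
| RCdia: "ConstCK (CIff B C) \<Longrightarrow> ConstCK (CIff (CDiaArr A B) (CDiaArr A C))"

inductive WK :: "'a mfm \<Rightarrow> bool" where
  K:  "WK (MImp A (MImp B A))"
| S:  "WK (MImp (MImp A (MImp B C)) (MImp (MImp A B) (MImp A C)))"
| AndE1: "WK (MImp (MAnd A B) A)"
| AndE2: "WK (MImp (MAnd A B) B)"
| AndI: "WK (MImp A (MImp B (MAnd A B)))"
| OrI1: "WK (MImp A (MOr A B))"
| OrI2: "WK (MImp B (MOr A B))"
| OrE: "WK (MImp (MImp A C) (MImp (MImp B C) (MImp (MOr A B) C)))"
| BotE: "WK (MImp MBot A)"
| MP: "WK (MImp A B) \<Longrightarrow> WK A \<Longrightarrow> WK B"
| Nec: "WK A \<Longrightarrow> WK (MBox A)"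
| Kbox: "WK (MImp (MBox (MImp A B)) (MImp (MBox A) (MBox B)))"
| Kdia: "WK (MImp (MBox (MImp A B)) (MImp (MDia A) (MDia B)))"
| Ndia: "WK (MNeg (MDia MBot))"

primrec tau :: "'a mfm \<Rightarrow> 'a cfm" where
  "tau (MAtom p) = CAtom p"
| "tau MBot = CBot"
| "tau (MAnd A B) = CAnd (tau A) (tau B)"
| "tau (MOr A B) = COr (tau A) (tau B)"
| "tau (MImp A B) = CImp (tau A) (tau B)"
| "tau (MBox A) = CBoxArr CTop (tau A)"
| "tau (MDia A) = CDiaArr CTop (tau A)"

end

theory Submission
  imports Defs
begin

text \<open>
  Soundness of the translation is an induction on WK-derivations: necessitation comes from
  CN_box and RC_box, and the K-axiom for \<box> from CC_box together with the
  monotonicity in the consequent that RC_box and CM_box give.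
  For faithfulness, erase the antecedent of every conditional. This is a left inverse of
  \<open>tau\<close>, and it maps every ConstCK-theorem to a WK-theorem: the rules RA become trivial and
  the rules RC follow from the monotonicity of \<box> and \<diamond> in WK.
\<close>

locale imp_conj_calculus =
  fixes Pr :: "'f \<Rightarrow> bool" and Imp :: "'f \<Rightarrow> 'f \<Rightarrow> 'f" and Conj :: "'f \<Rightarrow> 'f \<Rightarrow> 'f"
  assumes ax_K: "Pr (Imp A (Imp B A))"
    and ax_S: "Pr (Imp (Imp A (Imp B C)) (Imp (Imp A B) (Imp A C)))"
    and ax_conj_elim1: "Pr (Imp (Conj A B) A)"
    and ax_conj_elim2: "Pr (Imp (Conj A B) B)"
    and ax_conj_intro: "Pr (Imp A (Imp B (Conj A B)))"
    and mp: "Pr (Imp A B) \<Longrightarrow> Pr A \<Longrightarrow> Pr B"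
begin

lemma imp_refl: "Pr (Imp A A)"
  by (rule mp[OF mp[OF ax_S[of A "Imp A A" A] ax_K] ax_K])

lemma imp_weaken: "Pr B \<Longrightarrow> Pr (Imp A B)"
  by (rule mp[OF ax_K])

lemma mp_under_hyp: "Pr (Imp X (Imp U V)) \<Longrightarrow> Pr (Imp X U) \<Longrightarrow> Pr (Imp X V)"
  by (rule mp[OF mp[OF ax_S]])

lemma imp_trans: "Pr (Imp A B) \<Longrightarrow> Pr (Imp B C) \<Longrightarrow> Pr (Imp A C)"
  by (rule mp_under_hyp[OF imp_weaken])

lemma conj_intro: "Pr A \<Longrightarrow> Pr B \<Longrightarrow> Pr (Conj A B)"
  by (rule mp[OF mp[OF ax_conj_intro]])

lemma conj_elim1: "Pr (Conj A B) \<Longrightarrow> Pr A"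
  by (rule mp[OF ax_conj_elim1])

lemma conj_elim2: "Pr (Conj A B) \<Longrightarrow> Pr B"
  by (rule mp[OF ax_conj_elim2])

lemma imp_conj: "Pr (Imp X Y) \<Longrightarrow> Pr (Imp X Z) \<Longrightarrow> Pr (Imp X (Conj Y Z))"
  by (rule mp_under_hyp[OF mp_under_hyp[OF imp_weaken[OF ax_conj_intro]]])

lemma uncurry: "Pr (Imp P (Imp Q R)) \<Longrightarrow> Pr (Imp (Conj P Q) R)"
  by (rule mp_under_hyp[OF imp_trans[OF ax_conj_elim1] ax_conj_elim2])

lemma curry:
  assumes "Pr (Imp (Conj P Q) R)"
  shows "Pr (Imp P (Imp Q R))"
proof -
  have "Pr (Imp P (Imp Q (Imp (Conj P Q) R)))"
    by (rule imp_weaken[OF imp_weaken[OF assms]])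
  then show ?thesis
    by (rule mp_under_hyp[OF mp_under_hyp[OF imp_weaken[OF ax_S]] ax_conj_intro])
qed

lemma conj_modus_ponens: "Pr (Imp (Conj (Imp A B) A) B)"
  by (rule uncurry[OF imp_refl])

end

interpretation ConstCK: imp_conj_calculus ConstCK CImp CAnd
  by unfold_locales (fact ConstCK.K ConstCK.S ConstCK.AndE1 ConstCK.AndE2 ConstCK.AndI
      | erule (1) ConstCK.MP)+

interpretation WK: imp_conj_calculus WK MImp MAnd
  by unfold_locales (fact WK.K WK.S WK.AndE1 WK.AndE2 WK.AndI | erule (1) WK.MP)+

lemma ConstCK_top: "ConstCK CTop"
  unfolding CTop_def CNeg_def by (rule ConstCK.imp_refl)

lemma ConstCK_BoxArr_mono:
  assumes "ConstCK (CImp X Y)"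
  shows "ConstCK (CImp (CBoxArr A X) (CBoxArr A Y))"
proof -
  have "ConstCK (CIff X (CAnd X Y))"
    unfolding CIff_def
    by (rule ConstCK.conj_intro[OF ConstCK.imp_conj[OF ConstCK.imp_refl assms]
          ConstCK.ax_conj_elim1])
  then have "ConstCK (CIff (CBoxArr A X) (CBoxArr A (CAnd X Y)))"
    by (rule ConstCK.RCbox)
  then have "ConstCK (CImp (CBoxArr A X) (CBoxArr A (CAnd X Y)))"
    unfolding CIff_def by (rule ConstCK.conj_elim1)
  then show ?thesis
    by (rule ConstCK.imp_trans[OF ConstCK.imp_trans[OF _ ConstCK.CMbox] ConstCK.ax_conj_elim2])
qed

lemma ConstCK_BoxArr_nec:
  assumes "ConstCK B"
  shows "ConstCK (CBoxArr A B)"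
proof -
  have "ConstCK (CIff CTop B)"
    unfolding CIff_def
    by (rule ConstCK.conj_intro[OF ConstCK.imp_weaken[OF assms] ConstCK.imp_weaken[OF ConstCK_top]])
  then have "ConstCK (CIff (CBoxArr A CTop) (CBoxArr A B))"
    by (rule ConstCK.RCbox)
  then have "ConstCK (CImp (CBoxArr A CTop) (CBoxArr A B))"
    unfolding CIff_def by (rule ConstCK.conj_elim1)
  then show ?thesis
    by (rule ConstCK.mp[OF _ ConstCK.CNbox])
qed

lemma ConstCK_tau_if_WK: "WK \<phi> \<Longrightarrow> ConstCK (tau \<phi>)"
proof (induction rule: WK.induct)
  case (MP A B)
  then show ?case by (auto intro: ConstCK.MP)
next
  case (Nec A)
  then show ?case by (simp add: ConstCK_BoxArr_nec)
next
  case (Kbox A B)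
  show ?case
    by simp (rule ConstCK.curry[OF ConstCK.imp_trans[OF ConstCK.CCbox
          ConstCK_BoxArr_mono[OF ConstCK.conj_modus_ponens]]])
next
  case (Kdia A B)
  show ?case by (simp add: ConstCK.CKdia)
next
  case Ndia
  show ?case using ConstCK.CNdia[of CTop] by (simp add: MNeg_def CNeg_def)
qed (auto intro: ConstCK.intros)

primrec erase_antecedents :: "'a cfm \<Rightarrow> 'a mfm" where
  "erase_antecedents (CAtom p) = MAtom p"
| "erase_antecedents CBot = MBot"
| "erase_antecedents (CAnd A B) = MAnd (erase_antecedents A) (erase_antecedents B)"
| "erase_antecedents (COr A B) = MOr (erase_antecedents A) (erase_antecedents B)"
| "erase_antecedents (CImp A B) = MImp (erase_antecedents A) (erase_antecedents B)"
| "erase_antecedents (CBoxArr A B) = MBox (erase_antecedents B)"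
| "erase_antecedents (CDiaArr A B) = MDia (erase_antecedents B)"

lemma erase_antecedents_tau: "erase_antecedents (tau \<phi>) = \<phi>"
  by (induction \<phi>) auto

lemma WK_Box_mono: "WK (MImp X Y) \<Longrightarrow> WK (MImp (MBox X) (MBox Y))"
  by (rule WK.MP[OF WK.Kbox WK.Nec])

lemma WK_Dia_mono: "WK (MImp X Y) \<Longrightarrow> WK (MImp (MDia X) (MDia Y))"
  by (rule WK.MP[OF WK.Kdia WK.Nec])

lemma WK_erase_antecedents_if_ConstCK: "ConstCK \<psi> \<Longrightarrow> WK (erase_antecedents \<psi>)"
proof (induction rule: ConstCK.induct)
  case (MP A B)
  then show ?case by (auto intro: WK.MP)
next
  case (CMbox A B C)
  show ?case
    by simp (rule WK.imp_conj[OF WK_Box_mono[OF WK.ax_conj_elim1] WK_Box_mono[OF WK.ax_conj_elim2]])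
next
  case (CCbox A B C)
  show ?case
    by simp (rule WK.uncurry[OF WK.imp_trans[OF WK_Box_mono[OF WK.ax_conj_intro] WK.Kbox]])
next
  case (CNbox A)
  show ?case unfolding CTop_def CNeg_def by simp (rule WK.Nec[OF WK.imp_refl])
next
  case (CNdia A)
  show ?case using WK.Ndia by (simp add: MNeg_def CNeg_def)
next
  case (CKdia A B C)
  show ?case by (simp add: WK.Kdia)
next
  case (RAbox A R B)
  show ?case unfolding CIff_def by simp (rule WK.conj_intro[OF WK.imp_refl WK.imp_refl])
next
  case (RAdia A R B)
  show ?case unfolding CIff_def by simp (rule WK.conj_intro[OF WK.imp_refl WK.imp_refl])
next
  case (RCbox B C A)
  then have "WK (MAnd (MImp (erase_antecedents B) (erase_antecedents C))
                      (MImp (erase_antecedents C) (erase_antecedents B)))"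
    by (simp add: CIff_def)
  then show ?case
    unfolding CIff_def
    by simp (rule WK.conj_intro[OF WK_Box_mono[OF WK.conj_elim1] WK_Box_mono[OF WK.conj_elim2]])
next
  case (RCdia B C A)
  then have "WK (MAnd (MImp (erase_antecedents B) (erase_antecedents C))
                      (MImp (erase_antecedents C) (erase_antecedents B)))"
    by (simp add: CIff_def)
  then show ?case
    unfolding CIff_def
    by simp (rule WK.conj_intro[OF WK_Dia_mono[OF WK.conj_elim1] WK_Dia_mono[OF WK.conj_elim2]])
qed (auto intro: WK.intros)

theorem theorem8:
  fixes \<phi> :: "'a mfm"
  shows "WK \<phi> \<longleftrightarrow> ConstCK (tau \<phi>)"
proof
  show "WK \<phi> \<Longrightarrow> ConstCK (tau \<phi>)"
    by (rule ConstCK_tau_if_WK)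
  show "ConstCK (tau \<phi>) \<Longrightarrow> WK \<phi>"
    using WK_erase_antecedents_if_ConstCK[of "tau \<phi>"] by (simp add: erase_antecedents_tau)
qed

end
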